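(* Let $G=(V,E)$ be a graph whose vertex set $V$ is a discrete subset of $\mathbb{R}^n$ and such that every vertex has finite degree. Then $\bar\alpha(G)=\limsup_{R\to\infty}\bar\alpha(G_R)$, where $G_R$ is the finite induced subgraph of $G$ on $V_R=V\cap[-R,R]^n$.
   Context: For $A\subset V$, its density in $G$ is $\delta_G(A)=\limsup_{R\to\infty}\frac{|A\cap V_R|}{|V_R|}$ with $V_R=V\cap[-R,R]^n$. For infinite $G$, $\bar\alpha(G)=\sup\{\delta_G(A): A \text{ independent set of } G\}$; for a finite graph $F$ with vertex set $W$, $\bar\alpha(F)=\alpha(F)/|W|$ where $\alpha$ is the independence number. *)

theory Defs
  imports "HOL-Analysis.Analysis"
begin

definition graph_on :: "'v set \<Rightarrow> ('v \<Rightarrow> 'v \<Rightarrow> bool) \<Rightarrow> bool" where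
  "graph_on V E \<longleftrightarrow> (\<forall>x y. E x y \<longrightarrow> x \<in> V \<and> y \<in> V) \<and>
                     (\<forall>x y. E x y \<longrightarrow> E y x) \<and> (\<forall>x. \<not> E x x)"

definition finite_degrees :: "'v set \<Rightarrow> ('v \<Rightarrow> 'v \<Rightarrow> bool) \<Rightarrow> bool" where
  "finite_degrees V E \<longleftrightarrow> (\<forall>v\<in>V. finite {u. E v u})"

text \<open>Discrete subset of R^n in the sense needed (every V_R finite, i.e. closed discrete).\<close>
definition locally_finite_set :: "(real ^ 'n) set \<Rightarrow> bool" where
  "locally_finite_set V \<longleftrightarrow> (\<forall>R::real. finite {x\<in>V. \<forall>i. \<bar>x $ i\<bar> \<le> R})"

definition box_part :: "(real ^ 'n) set \<Rightarrow> real \<Rightarrow> (real ^ 'n) set" where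
  "box_part V R = V \<inter> {x. \<forall>i. \<bar>x $ i\<bar> \<le> R}"

definition indep_set :: "'v set \<Rightarrow> ('v \<Rightarrow> 'v \<Rightarrow> bool) \<Rightarrow> 'v set \<Rightarrow> bool" where
  "indep_set V E A \<longleftrightarrow> A \<subseteq> V \<and> (\<forall>x\<in>A. \<forall>y\<in>A. \<not> E x y)"

definition indep_num :: "'v set \<Rightarrow> ('v \<Rightarrow> 'v \<Rightarrow> bool) \<Rightarrow> nat" where
  "indep_num W E = Max {card A | A. indep_set W E A}"

definition alpha_bar_fin :: "'v set \<Rightarrow> ('v \<Rightarrow> 'v \<Rightarrow> bool) \<Rightarrow> real" where
  "alpha_bar_fin W E = real (indep_num W E) / real (card W)"

definition density :: "(real ^ 'n) set \<Rightarrow> (real ^ 'n) set \<Rightarrow> ereal" where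
  "density V A = Limsup at_top (\<lambda>R::real.
     ereal (real (card (A \<inter> box_part V R)) / real (card (box_part V R))))"

definition alpha_bar :: "(real ^ 'n) set \<Rightarrow> (real ^ 'n \<Rightarrow> real ^ 'n \<Rightarrow> bool) \<Rightarrow> ereal" where
  "alpha_bar V E = (SUP A \<in> {A. indep_set V E A}. density V A)"

end

theory Submission
  imports Defs
begin

text \<open>Restricting an independent set of G to V_R gives an independent set of G_R, so no
  density exceeds the limsup. Conversely, for infinite V and y below the limsup, choose radii
  r_0 \<le> r_1 \<le> ... such that G_r_(k+1) has independence ratio above y and V_r_(k+1) is so
  large that the (finite) neighbourhood of V_r_k is less than a 1/(k+1) fraction of it. A maximum
  independent set of G_r_(k+1), stripped of the neighbours of V_r_k, has no edges to the earlier
  pieces; so the union of these pieces is independent in G, and its density along the radii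
  r_(k+1) is at least y. For finite V, simply V_R = V for large R.\<close>

lemma finite_box_part: "locally_finite_set V \<Longrightarrow> finite (box_part V R)"
proof -
  have "box_part V R = {x\<in>V. \<forall>i. \<bar>x $ i\<bar> \<le> R}"
    unfolding box_part_def by blast
  then show "locally_finite_set V \<Longrightarrow> finite (box_part V R)"
    unfolding locally_finite_set_def by simp
qed

lemma box_part_subset: "box_part V R \<subseteq> V"
  unfolding box_part_def by auto

lemma box_part_mono: "R \<le> R' \<Longrightarrow> box_part V R \<subseteq> box_part V R'"
  unfolding box_part_def using order_trans by blast

lemma eventually_subset_box_part:
  fixes S :: "(real ^ 'n) set"
  assumes "finite S" "S \<subseteq> V"
  shows "eventually (\<lambda>R. S \<subseteq> box_part V R) at_top"
proof -
  obtain B where B: "\<forall>x\<in>S. norm x \<le> B"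
    using finite_imp_bounded[OF \<open>finite S\<close>] bounded_iff by blast
  have "S \<subseteq> box_part V R" if "B \<le> R" for R
  proof
    fix x
    assume "x \<in> S"
    then have "\<bar>x $ i\<bar> \<le> R" for i
      using B component_le_norm_cart[of x i] \<open>B \<le> R\<close> by fastforce
    then show "x \<in> box_part V R"
      using assms(2) \<open>x \<in> S\<close> unfolding box_part_def by blast
  qed
  then show ?thesis
    unfolding eventually_at_top_linorder by blast
qed

lemma eventually_box_part_eq: "finite V \<Longrightarrow> eventually (\<lambda>R. box_part V R = V) at_top"
  using eventually_subset_box_part[of V V] box_part_subset
  by (auto elim!: eventually_mono)

lemma eventually_card_box_part_ge:
  assumes "locally_finite_set V" "infinite V"
  shows "eventually (\<lambda>R. M \<le> card (box_part V R)) at_top"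
proof -
  obtain S where S: "S \<subseteq> V" "finite S" "card S = M"
    using infinite_arbitrarily_large[OF \<open>infinite V\<close>] by blast
  show ?thesis
    using eventually_subset_box_part[OF S(2,1)]
    by eventually_elim (use S(3) card_mono finite_box_part[OF assms(1)] in blast)
qed

lemma finite_indep_cards:
  assumes "finite W"
  shows "finite {card A | A. indep_set W E A}"
proof -
  have "{card A | A. indep_set W E A} \<subseteq> {..card W}"
    using assms by (auto simp: indep_set_def intro: card_mono)
  then show ?thesis
    using finite_subset by blast
qed

lemma card_le_indep_num: "finite W \<Longrightarrow> indep_set W E A \<Longrightarrow> card A \<le> indep_num W E"
  unfolding indep_num_def using finite_indep_cards by (intro Max_ge) auto

lemma indep_num_attained: "finite W \<Longrightarrow> \<exists>A. indep_set W E A \<and> card A = indep_num W E"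
proof -
  assume "finite W"
  moreover have "indep_set W E {}"
    by (simp add: indep_set_def)
  ultimately show ?thesis
    unfolding indep_num_def using Max_in[OF finite_indep_cards] by fastforce
qed

definition neighbours :: "('v \<Rightarrow> 'v \<Rightarrow> bool) \<Rightarrow> 'v set \<Rightarrow> 'v set" where
  "neighbours E S = {u. \<exists>v\<in>S. E v u}"

lemma finite_neighbours:
  assumes "finite_degrees V E" "finite S" "S \<subseteq> V"
  shows "finite (neighbours E S)"
proof -
  have "neighbours E S = (\<Union>v\<in>S. {u. E v u})"
    by (auto simp: neighbours_def)
  then show ?thesis
    using assms by (auto simp: finite_degrees_def)
qed

lemma indep_set_UN_Diff_neighbours:
  fixes W :: "nat \<Rightarrow> 'v set"
  assumes sym: "\<And>x y. E x y \<Longrightarrow> E y x"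
    and "mono W"
    and indep: "\<And>k. indep_set (W (Suc k)) E (I k)"
    and "\<And>k. W k \<subseteq> V"
  shows "indep_set V E (\<Union>k. I k - neighbours E (W k))"
proof -
  let ?A = "\<Union>k. I k - neighbours E (W k)"
  have no_edge_later: "\<not> E x y"
    if "x \<in> I j" "y \<in> I m - neighbours E (W m)" "j < m" for x y j m
  proof -
    have "x \<in> W m"
      using indep[of j] monoD[OF \<open>mono W\<close>, of "Suc j" m] \<open>j < m\<close> \<open>x \<in> I j\<close>
      by (auto simp: indep_set_def)
    then show ?thesis
      using \<open>y \<in> I m - neighbours E (W m)\<close> by (auto simp: neighbours_def)
  qed
  have "\<not> E x y" if xy: "x \<in> ?A" "y \<in> ?A" for x y
  proof -
    obtain j m where x: "x \<in> I j - neighbours E (W j)" and y: "y \<in> I m - neighbours E (W m)"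
      using xy by blast
    consider "j = m" | "j < m" | "m < j"
      by linarith
    then show ?thesis
    proof cases
      case 1
      then show ?thesis
        using indep[of j] x y by (auto simp: indep_set_def)
    qed (use no_edge_later x y sym in blast)+
  qed
  moreover have "?A \<subseteq> V"
    using indep assms(4) unfolding indep_set_def by blast
  ultimately show ?thesis
    by (auto simp: indep_set_def)
qed

lemma alpha_bar_fin_le_ratio_add:
  assumes "finite W" "finite N" "finite B"
    and "indep_set W E I" "card I = indep_num W E" "I - N \<subseteq> B"
  shows "alpha_bar_fin W E \<le> real (card B) / real (card W) + real (card N) / real (card W)"
proof -
  have "card I - card N \<le> card (I - N)"
    using diff_card_le_card_Diff[OF \<open>finite N\<close>] .
  also have "\<dots> \<le> card B"
    using card_mono[OF \<open>finite B\<close> \<open>I - N \<subseteq> B\<close>] .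
  finally have "real (indep_num W E) \<le> real (card B) + real (card N)"
    using \<open>card I = indep_num W E\<close> by linarith
  then show ?thesis
    unfolding alpha_bar_fin_def add_divide_distrib[symmetric] by (rule divide_right_mono) simp
qed

lemma less_LimsupD:
  fixes X :: "_ \<Rightarrow> 'a::complete_linorder"
  assumes "y < Limsup F X"
  shows "\<exists>\<^sub>F x in F. y < X x"
proof (rule ccontr)
  assume "\<not> (\<exists>\<^sub>F x in F. y < X x)"
  then have "eventually (\<lambda>x. X x \<le> y) F"
    by (simp add: not_frequently not_less)
  then have "Limsup F X \<le> y"
    by (rule Limsup_bounded)
  with assms show False
    by simp
qed

lemma ereal_le_Limsup_at_top:
  fixes g :: "real \<Rightarrow> real"
  assumes "\<And>\<epsilon> T. \<epsilon> > 0 \<Longrightarrow> \<exists>R\<ge>T. y - \<epsilon> < g R"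
  shows "ereal y \<le> Limsup at_top (\<lambda>R. ereal (g R))"
proof (rule ccontr)
  assume "\<not> ereal y \<le> Limsup at_top (\<lambda>R. ereal (g R))"
  then obtain z where z: "Limsup at_top (\<lambda>R. ereal (g R)) < ereal z" "z < y"
    using ereal_dense2[of _ "ereal y"] by (auto simp: not_le)
  then obtain T where T: "\<forall>R\<ge>T. g R < z"
    using Limsup_lessD[OF z(1)] by (auto simp: eventually_at_top_linorder)
  obtain R where "R \<ge> T" "y - (y - z) < g R"
    using assms[of "y - z" T] z(2) by auto
  with T show False
    by force
qed

lemma exists_radii_sequence:
  fixes P :: "real \<Rightarrow> bool" and c f :: "real \<Rightarrow> nat"
  assumes "\<exists>\<^sub>F R in at_top. P R"
    and "\<And>M. eventually (\<lambda>R. M \<le> c R) at_top"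
  obtains rs :: "nat \<Rightarrow> real" where
    "incseq rs" "\<And>k. real k \<le> rs (Suc k)" "\<And>k. P (rs (Suc k))"
    "\<And>k. f (rs k) * Suc k < c (rs (Suc k))"
proof -
  define Q where "Q k r R \<longleftrightarrow> r \<le> R \<and> real k \<le> R \<and> P R \<and> f r * Suc k < c R" for k r R
  have "\<exists>R. Q k r R" for k r
  proof -
    have "eventually (\<lambda>R. r \<le> R \<and> real k \<le> R \<and> f r * Suc k < c R) at_top"
      using assms(2)[of "Suc (f r * Suc k)"] eventually_ge_at_top[of r]
        eventually_ge_at_top[of "real k"]
      by eventually_elim auto
    from frequently_eventually_conj[OF assms(1) this] show ?thesis
      unfolding Q_def by (auto dest: frequently_ex)
  qed
  then obtain rs where "\<forall>k. Q k (rs k) (rs (Suc k))"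
    using dependent_nat_choice[of "\<lambda>_ _. True" Q] by blast
  then show ?thesis
    using that[of rs] by (auto simp: Q_def intro: incseq_SucI)
qed

lemma alpha_bar_le_Limsup:
  assumes "locally_finite_set V"
  shows "alpha_bar V E \<le> Limsup at_top (\<lambda>R. ereal (alpha_bar_fin (box_part V R) E))"
  unfolding alpha_bar_def density_def
proof (rule SUP_least, rule Limsup_mono, rule always_eventually, rule allI)
  fix A R
  assume "A \<in> {A. indep_set V E A}"
  then have "indep_set (box_part V R) E (A \<inter> box_part V R)"
    by (auto simp: indep_set_def)
  then have "card (A \<inter> box_part V R) \<le> indep_num (box_part V R) E"
    using card_le_indep_num finite_box_part[OF assms] by blast
  then show "ereal (real (card (A \<inter> box_part V R)) / real (card (box_part V R)))
      \<le> ereal (alpha_bar_fin (box_part V R) E)"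
    unfolding alpha_bar_fin_def by (simp add: divide_right_mono)
qed

lemma density_finite:
  assumes "finite V"
  shows "density V A = ereal (real (card (A \<inter> V)) / real (card V))"
proof -
  have "eventually (\<lambda>R. ereal (real (card (A \<inter> box_part V R)) / real (card (box_part V R)))
      = ereal (real (card (A \<inter> V)) / real (card V))) at_top"
    using eventually_box_part_eq[OF assms] by eventually_elim simp
  from Limsup_eq[OF this] show ?thesis
    unfolding density_def by (simp add: Limsup_const)
qed

lemma Limsup_alpha_bar_fin_finite:
  assumes "finite V"
  shows "Limsup at_top (\<lambda>R. ereal (alpha_bar_fin (box_part V R) E)) = ereal (alpha_bar_fin V E)"
proof -
  have "eventually (\<lambda>R. ereal (alpha_bar_fin (box_part V R) E) = ereal (alpha_bar_fin V E)) at_top"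
    using eventually_box_part_eq[OF assms] by eventually_elim simp
  from Limsup_eq[OF this] show ?thesis
    by (simp add: Limsup_const)
qed

lemma exists_indep_set_density_ge:
  fixes V :: "(real ^ 'n) set"
  assumes "graph_on V E" "locally_finite_set V" "finite_degrees V E" "infinite V"
    and "ereal y < Limsup at_top (\<lambda>R. ereal (alpha_bar_fin (box_part V R) E))"
  obtains A where "indep_set V E A" "ereal y \<le> density V A"
proof -
  have fin: "\<And>R. finite (box_part V R)"
    using finite_box_part[OF assms(2)] .
  have "\<forall>R. \<exists>A. indep_set (box_part V R) E A \<and> card A = indep_num (box_part V R) E"
    using indep_num_attained[OF fin] by blast
  then obtain I where "\<forall>R. indep_set (box_part V R) E (I R) \<and> card (I R) = indep_num (box_part V R) E"
    by (auto dest: choice)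
  then have I: "\<And>R. indep_set (box_part V R) E (I R)"
    "\<And>R. card (I R) = indep_num (box_part V R) E"
    by auto
  have "\<exists>\<^sub>F R in at_top. y < alpha_bar_fin (box_part V R) E"
    using less_LimsupD[OF assms(5)] by simp
  then obtain rs where rs: "incseq rs" "\<And>k. real k \<le> rs (Suc k)"
    "\<And>k. y < alpha_bar_fin (box_part V (rs (Suc k))) E"
    "\<And>k. card (neighbours E (box_part V (rs k))) * Suc k < card (box_part V (rs (Suc k)))"
    by (rule exists_radii_sequence[OF _ eventually_card_box_part_ge[OF assms(2,4)],
          where f = "\<lambda>r. card (neighbours E (box_part V r))"]) blast
  define N where "N k = neighbours E (box_part V (rs k))" for k
  define A where "A = (\<Union>k. I (rs (Suc k)) - N k)"
  have "indep_set V E A"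
    unfolding A_def N_def
  proof (rule indep_set_UN_Diff_neighbours)
    show "E x y \<Longrightarrow> E y x" for x y
      using assms(1) by (simp add: graph_on_def)
    show "mono (\<lambda>k. box_part V (rs k))"
      by (intro monoI box_part_mono incseqD[OF rs(1)])
  qed (use I(1) box_part_subset in auto)
  have ratio: "y - 1 / Suc k
      < real (card (A \<inter> box_part V (rs (Suc k)))) / real (card (box_part V (rs (Suc k))))" for k
  proof -
    let ?W = "box_part V (rs (Suc k))"
    have "finite (N k)"
      unfolding N_def using finite_neighbours assms(3) fin box_part_subset by blast
    moreover have "I (rs (Suc k)) - N k \<subseteq> A \<inter> ?W"
      using I(1) by (auto simp: A_def indep_set_def)
    ultimately have ab: "alpha_bar_fin ?W E
        \<le> real (card (A \<inter> ?W)) / real (card ?W) + real (card (N k)) / real (card ?W)"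
      by (intro alpha_bar_fin_le_ratio_add[OF fin _ _ I]) (use fin in auto)
    have small: "real (card (N k)) * Suc k < real (card ?W)"
      using rs(4)[of k] unfolding N_def by (metis of_nat_less_iff of_nat_mult)
    then have "0 < real (card ?W)"
      by (meson le_less_trans mult_nonneg_nonneg of_nat_0_le_iff)
    with small have "real (card (N k)) / real (card ?W) < 1 / Suc k"
      by (simp add: field_simps)
    with ab show ?thesis
      using rs(3)[of k] by linarith
  qed
  have "ereal y \<le> density V A"
    unfolding density_def
  proof (rule ereal_le_Limsup_at_top)
    fix \<epsilon> T :: real
    assume "\<epsilon> > 0"
    obtain k :: nat where k: "max T (1 / \<epsilon>) < k"
      using reals_Archimedean2 by blast
    then have "1 / \<epsilon> < Suc k"
      by simp
    then have "1 / Suc k < \<epsilon>"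
      using \<open>\<epsilon> > 0\<close> by (simp add: field_simps)
    then show "\<exists>R\<ge>T. y - \<epsilon> < real (card (A \<inter> box_part V R)) / real (card (box_part V R))"
      using ratio[of k] rs(2)[of k] k by (intro exI[of _ "rs (Suc k)"]) auto
  qed
  with \<open>indep_set V E A\<close> show ?thesis
    using that by blast
qed

lemma Limsup_le_alpha_bar:
  fixes V :: "(real ^ 'n) set"
  assumes "graph_on V E" "locally_finite_set V" "finite_degrees V E"
  shows "Limsup at_top (\<lambda>R. ereal (alpha_bar_fin (box_part V R) E)) \<le> alpha_bar V E"
proof (cases "finite V")
  case True
  then obtain A where A: "indep_set V E A" "card A = indep_num V E"
    using indep_num_attained by blast
  then have "density V A = ereal (alpha_bar_fin V E)"
    using density_finite[OF True] by (simp add: alpha_bar_fin_def Int_absorb2 indep_set_def)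
  then have "Limsup at_top (\<lambda>R. ereal (alpha_bar_fin (box_part V R) E)) = density V A"
    using Limsup_alpha_bar_fin_finite[OF True] by simp
  also have "\<dots> \<le> alpha_bar V E"
    unfolding alpha_bar_def using A(1) by (intro SUP_upper) simp
  finally show ?thesis .
next
  case False
  show ?thesis
  proof (rule dense_le)
    fix x
    assume x: "x < Limsup at_top (\<lambda>R. ereal (alpha_bar_fin (box_part V R) E))"
    show "x \<le> alpha_bar V E"
    proof (cases x)
      case (real y)
      then obtain A where "indep_set V E A" "x \<le> density V A"
        using exists_indep_set_density_ge[OF assms False] x by metis
      then show ?thesis
        unfolding alpha_bar_def by (meson SUP_upper2 mem_Collect_eq)
    qed (use x in auto)
  qed
qed

theorem lemma1:
  fixes V :: "(real ^ 'n) set" and E :: "real ^ 'n \<Rightarrow> real ^ 'n \<Rightarrow> bool"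
  assumes "graph_on V E"
    and "locally_finite_set V"
    and "finite_degrees V E"
  shows "alpha_bar V E =
    Limsup at_top (\<lambda>R::real. ereal (alpha_bar_fin (box_part V R) E))"
  using alpha_bar_le_Limsup[OF assms(2)] Limsup_le_alpha_bar[OF assms] by (rule antisym)

end
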